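(* Let $n=2$. For every pair of distributions $G_1,G_2$ satisfying the standing assumptions, at least one of the qualified majority rules $f^{(1)}$ or $f^{(2)}$ solves program (OPT). In particular, the maximal expected welfare in (OPT) is achieved by an ordinal SCF.
   Context: There are $n\ge 2$ agents $N=\{1,\dots,n\}$ choosing between a Reform $R$ and the Status quo $S$. Agent $i$ gets utility $0$ if $S$ is chosen and utility $v_i\in\mathbb{R}$ if $R$ is chosen. Values are independent random variables $\tilde v_1,\dots,\tilde v_n$, $\tilde v_i\sim G_i$ (Borel probability distributions on $\mathbb{R}$, $G_i(0)=\Pr(\tilde v_i\le 0)$). Standing assumptions: all $\tilde v_i$ have the same support $V$ with $0\notin V$; $\mathbb{E}|\tilde v_i|<\infty$; $p_i:=1-G_i(0)\in(0,1)$. The distributions need not be identical. An SCF is a Borel measurable $f:V^n\to[0,1]$ (probability of choosing $R$). $f$ is anonymous if $f(v)=f(\pi v)$ for every $v\in V^n$ and every permutation $\pi$ of $N$, where $\pi v=(v_{\pi(1)},\dots,v_{\pi(n)})$. $f$ is BIC if for every $i$ and all $v_i,v_i'\in V$: $v_i\,\mathbb{E}(f(v_i,\tilde v_{-i}))\ge v_i\,\mathbb{E}(f(v_i',\tilde v_{-i}))$ (expectation over $\tilde v_{-i}=(\tilde v_j)_{j\neq i}$). Expected welfare is $W(f)=\mathbb{E}\big(f(\tilde v)\sum_{i=1}^n\tilde v_i\big)$. Program (OPT): maximize $W(f)$ subject to $f$ being anonymous and BIC. For $v\in V^n$ let $\chi(v)=\{i\in N: v_i>0\}$. $f$ is ordinal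 if $f(v)=f(v')$ whenever $\chi(v)=\chi(v')$. For $k\in\{1,\dots,n\}$, the qualified majority rule $f^{(k)}$ is $f^{(k)}(v)=1$ if $|\chi(v)|\ge k$ and $f^{(k)}(v)=0$ otherwise. *)

theory Defs
  imports "HOL-Probability.Probability"
begin

text \<open>A profile of values is a pair (v1, v2) :: real \<times> real.
  Agent i's value distribution is a Borel probability measure Gi on the reals;
  values are independent, so the joint law is the product measure of G1 and G2.\<close>

definition supp :: "real measure \<Rightarrow> real set" where
  "supp M = {x. \<forall>e>0. measure M (ball x e) > 0}"

definition standing_assumptions :: "real measure \<Rightarrow> real measure \<Rightarrow> real set \<Rightarrow> bool" where
  "standing_assumptions G1 G2 V \<longleftrightarrow>
     prob_space G1 \<and> prob_space G2 \<and>
     sets G1 = sets borel \<and> sets G2 = sets borel \<and>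
     supp G1 = V \<and> supp G2 = V \<and> 0 \<notin> V \<and>
     integrable G1 (\<lambda>x. x) \<and> integrable G2 (\<lambda>x. x) \<and>
     0 < measure G1 {x. x > 0} \<and> measure G1 {x. x > 0} < 1 \<and>
     0 < measure G2 {x. x > 0} \<and> measure G2 {x. x > 0} < 1"

text \<open>An SCF: Borel measurable, with values in [0,1] on V x V (only its values there matter).\<close>
definition SCF :: "real set \<Rightarrow> (real \<times> real \<Rightarrow> real) \<Rightarrow> bool" where
  "SCF V f \<longleftrightarrow> f \<in> borel_measurable borel \<and> (\<forall>v\<in>V \<times> V. 0 \<le> f v \<and> f v \<le> 1)"

text \<open>For n = 2 the permutations are the identity and the swap.\<close>
definition anonymous :: "real set \<Rightarrow> (real \<times> real \<Rightarrow> real) \<Rightarrow> bool" where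
  "anonymous V f \<longleftrightarrow> (\<forall>a\<in>V. \<forall>b\<in>V. f (a, b) = f (b, a))"

definition BIC :: "real measure \<Rightarrow> real measure \<Rightarrow> real set \<Rightarrow> (real \<times> real \<Rightarrow> real) \<Rightarrow> bool" where
  "BIC G1 G2 V f \<longleftrightarrow>
     (\<forall>v\<in>V. \<forall>v'\<in>V. v * (\<integral>x. f (v, x) \<partial>G2) \<ge> v * (\<integral>x. f (v', x) \<partial>G2)) \<and>
     (\<forall>v\<in>V. \<forall>v'\<in>V. v * (\<integral>x. f (x, v) \<partial>G1) \<ge> v * (\<integral>x. f (x, v') \<partial>G1))"

definition welfare :: "real measure \<Rightarrow> real measure \<Rightarrow> (real \<times> real \<Rightarrow> real) \<Rightarrow> real" where
  "welfare G1 G2 f = (\<integral>z. f z * (fst z + snd z) \<partial>(G1 \<Otimes>\<^sub>M G2))"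

definition feasible :: "real measure \<Rightarrow> real measure \<Rightarrow> real set \<Rightarrow> (real \<times> real \<Rightarrow> real) \<Rightarrow> bool" where
  "feasible G1 G2 V f \<longleftrightarrow> SCF V f \<and> anonymous V f \<and> BIC G1 G2 V f"

definition solves_OPT :: "real measure \<Rightarrow> real measure \<Rightarrow> real set \<Rightarrow> (real \<times> real \<Rightarrow> real) \<Rightarrow> bool" where
  "solves_OPT G1 G2 V f \<longleftrightarrow>
     feasible G1 G2 V f \<and> (\<forall>g. feasible G1 G2 V g \<longrightarrow> welfare G1 G2 g \<le> welfare G1 G2 f)"

definition chi :: "real \<times> real \<Rightarrow> nat set" where
  "chi v = {i. (i = 1 \<and> fst v > 0) \<or> (i = 2 \<and> snd v > 0)}"

definition ordinal :: "real set \<Rightarrow> (real \<times> real \<Rightarrow> real) \<Rightarrow> bool" where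
  "ordinal V f \<longleftrightarrow> (\<forall>v\<in>V \<times> V. \<forall>w\<in>V \<times> V. chi v = chi w \<longrightarrow> f v = f w)"

definition qmaj :: "nat \<Rightarrow> real \<times> real \<Rightarrow> real" where
  "qmaj k v = (if card (chi v) \<ge> k then 1 else 0)"

end

theory Submission
  imports Defs
begin

text \<open>After replacing a feasible f by a symmetric [0,1]-valued function that agrees with it on
  V \<times> V, Bayesian incentive compatibility together with 0 \<notin> V forces each agent's interim
  probability of R to depend only on the sign of the own value: it is A_i for positive and B_i for
  negative values. Welfare is then linear in (A1, B1, A2, B2), and these numbers satisfy
  0 \<le> B_i, A_i \<le> 1, the equality of the two expressions for the ex-ante probability of R, and, by
  symmetry of f, p_j A_i - (1 - p_j) B_i \<le> p_j^2 for i \<noteq> j, where p_j is the probability that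
  agent j's value is positive. On this polytope each agent's welfare gain over f^(2) is at most
  c times the gain of f^(1) over f^(2), where c \<in> [0,1] locates the ex-ante probability of R
  between those of f^(2) and f^(1). Hence W(f) \<le> max (W(f^(1))) (W(f^(2))).\<close>

definition pos_prob :: "real measure \<Rightarrow> real" where
  "pos_prob M = measure M {x. 0 < x}"

definition pos_mean :: "real measure \<Rightarrow> real" where
  "pos_mean M = (\<integral>x. (if 0 < x then x else 0) \<partial>M)"

definition nonpos_mean :: "real measure \<Rightarrow> real" where
  "nonpos_mean M = (\<integral>x. (if 0 < x then 0 else x) \<partial>M)"

text \<open>For symmetric g, interim M g v is the probability of R for an agent with value v whose
  opponent's value is drawn from M.\<close>
definition interim :: "real measure \<Rightarrow> (real \<times> real \<Rightarrow> real) \<Rightarrow> real \<Rightarrow> real" where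
  "interim M g v = (\<integral>y. g (v, y) \<partial>M)"

context real_distribution
begin

lemma AE_in_supp: "AE x in M. x \<in> supp M"
proof -
  define N where "N = {ball x e | x e. 0 < e \<and> measure M (ball x e) = 0}"
  obtain N' where N': "N' \<subseteq> N" "countable N'" "\<Union>N' = \<Union>N"
    using Lindelof[of N] by (auto simp: N_def)
  have "(\<Union>B\<in>N'. B) \<in> null_sets M"
    using N' by (intro null_sets_UN') (auto simp: N_def null_sets_def emeasure_eq_measure)
  moreover have "{x \<in> space M. x \<notin> supp M} \<subseteq> (\<Union>B\<in>N'. B)"
  proof
    fix x assume "x \<in> {x \<in> space M. x \<notin> supp M}"
    then obtain e where "0 < e" "measure M (ball x e) \<le> 0"
      by (auto simp: supp_def not_less)
    then have "ball x e \<in> N"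
      using measure_nonneg[of M "ball x e"] by (auto simp: N_def)
    then show "x \<in> (\<Union>B\<in>N'. B)"
      using N'(3) \<open>0 < e\<close> by (metis UnionI centre_in_ball image_ident)
  qed
  ultimately show ?thesis by (rule AE_I')
qed

lemma exists_pos_of_AE:
  assumes "AE x in M. x \<in> V" and "0 < pos_prob M"
  shows "\<exists>a\<in>V. 0 < a"
proof (rule ccontr)
  assume none: "\<not> (\<exists>a\<in>V. 0 < a)"
  have "AE x in M. \<not> 0 < x"
    using assms(1) by eventually_elim (use none in auto)
  then have "pos_prob M = 0" by (simp add: pos_prob_def prob_eq_0)
  with assms(2) show False by simp
qed

lemma exists_neg_of_AE:
  assumes "AE x in M. x \<in> V" and "0 \<notin> V" and "pos_prob M < 1"
  shows "\<exists>b\<in>V. b < 0"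
proof (rule ccontr)
  assume none: "\<not> (\<exists>b\<in>V. b < 0)"
  have "AE x in M. 0 < x"
    using assms(1) by eventually_elim (use none assms(2) in \<open>metis linorder_neqE_linordered_idom\<close>)
  then have "pos_prob M = 1" by (simp add: pos_prob_def prob_eq_1)
  with assms(3) show False by simp
qed

lemma pos_mean_nonneg: "0 \<le> pos_mean M"
  unfolding pos_mean_def by (rule integral_nonneg_AE) simp

lemma nonpos_mean_nonpos: "nonpos_mean M \<le> 0"
proof -
  have "0 \<le> (\<integral>x. - (if 0 < x then 0 else x) \<partial>M)"
    by (rule integral_nonneg_AE) simp
  then show ?thesis by (simp add: nonpos_mean_def)
qed

lemma integral_mult_step:
  fixes h q :: "real \<Rightarrow> real"
  assumes h: "integrable M h" and [measurable]: "q \<in> borel_measurable borel"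
    and step: "AE x in M. q x = (if 0 < x then A else B)"
  shows "(\<integral>x. h x * q x \<partial>M)
    = A * (\<integral>x. (if 0 < x then h x else 0) \<partial>M) + B * (\<integral>x. (if 0 < x then 0 else h x) \<partial>M)"
proof -
  have [measurable]: "h \<in> borel_measurable M"
    using h by (rule borel_measurable_integrable)
  have int_pos: "integrable M (\<lambda>x. if 0 < x then h x else 0)"
  proof (rule Bochner_Integration.integrable_bound[OF h])
    show "(\<lambda>x. if 0 < x then h x else 0) \<in> borel_measurable M"
      by measurable
    show "AE x in M. norm (if 0 < x then h x else 0) \<le> norm (h x)"
      by (rule AE_I2) auto
  qed
  have int_nonpos: "integrable M (\<lambda>x. if 0 < x then 0 else h x)"
  proof (rule Bochner_Integration.integrable_bound[OF h])
    show "(\<lambda>x. if 0 < x then 0 else h x) \<in> borel_measurable M"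
      by measurable
    show "AE x in M. norm (if 0 < x then 0 else h x) \<le> norm (h x)"
      by (rule AE_I2) auto
  qed
  have "(\<integral>x. h x * q x \<partial>M)
      = (\<integral>x. A * (if 0 < x then h x else 0) + B * (if 0 < x then 0 else h x) \<partial>M)"
  proof (rule integral_cong_AE)
    show "AE x in M. h x * q x = A * (if 0 < x then h x else 0) + B * (if 0 < x then 0 else h x)"
      using step by eventually_elim simp
    show "(\<lambda>x. h x * q x) \<in> borel_measurable M"
      by measurable
    show "(\<lambda>x. A * (if 0 < x then h x else 0) + B * (if 0 < x then 0 else h x)) \<in> borel_measurable M"
      by measurable
  qed
  also have "\<dots> = A * (\<integral>x. (if 0 < x then h x else 0) \<partial>M) + B * (\<integral>x. (if 0 < x then 0 else h x) \<partial>M)"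
    using int_pos int_nonpos by simp
  finally show ?thesis .
qed

lemma integral_pos_indicator: "(\<integral>x. (if 0 < x then 1 else 0) \<partial>M) = pos_prob M"
proof -
  have "(\<integral>x. (if 0 < x then 1 else 0) \<partial>M) = (\<integral>x. indicator {x. 0 < x} x \<partial>M)"
    by (intro Bochner_Integration.integral_cong) (auto simp: indicator_def)
  also have "\<dots> = pos_prob M"
    using Bochner_Integration.integral_indicator[of M "{x. 0 < x}"] by (simp add: pos_prob_def)
  finally show ?thesis .
qed

lemma integral_nonpos_indicator: "(\<integral>x. (if 0 < x then 0 else 1) \<partial>M) = 1 - pos_prob M"
proof -
  have "(\<integral>x. (if 0 < x then 0 else 1) \<partial>M) = (\<integral>x. indicator (space M - {x. 0 < x}) x \<partial>M)"
    by (intro Bochner_Integration.integral_cong) (auto simp: indicator_def)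
  also have "\<dots> = 1 - pos_prob M"
    using Bochner_Integration.integral_indicator[of M "space M - {x. 0 < x}"] prob_compl[of "{x. 0 < x}"]
    by (simp add: pos_prob_def)
  finally show ?thesis .
qed

lemma
  fixes q :: "real \<Rightarrow> real"
  assumes q: "q \<in> borel_measurable borel"
    and step: "AE x in M. q x = (if 0 < x then A else B)"
  shows integral_step: "(\<integral>x. q x \<partial>M) = A * pos_prob M + B * (1 - pos_prob M)"
    and integral_sign_mult_step:
      "(\<integral>x. (if 0 < x then 1 else -1) * q x \<partial>M) = A * pos_prob M - B * (1 - pos_prob M)"
    and integral_id_mult_step:
      "integrable M (\<lambda>x. x) \<Longrightarrow> (\<integral>x. x * q x \<partial>M) = A * pos_mean M + B * nonpos_mean M"
proof -
  show "(\<integral>x. q x \<partial>M) = A * pos_prob M + B * (1 - pos_prob M)"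
    using integral_mult_step[of "\<lambda>_. 1", OF _ q step]
    by (simp add: integral_pos_indicator integral_nonpos_indicator)
  have "(\<integral>x. (if 0 < x then 0 else -1) \<partial>M) = (\<integral>x. - (if 0 < x then 0 else 1) \<partial>M)"
    by (intro Bochner_Integration.integral_cong) auto
  also have "\<dots> = - (1 - pos_prob M)"
    by (simp only: Bochner_Integration.integral_minus integral_nonpos_indicator)
  finally have neg: "(\<integral>x. (if 0 < x then 0 else -1) \<partial>M) = - (1 - pos_prob M)" .
  have "integrable M (\<lambda>x. if 0 < x then 1 else -1 :: real)"
    by (rule integrable_const_bound[where B=1]) (simp_all add: if_distrib[of norm])
  from integral_mult_step[OF this q step]
  show "(\<integral>x. (if 0 < x then 1 else -1) * q x \<partial>M) = A * pos_prob M - B * (1 - pos_prob M)"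
    by (simp add: integral_pos_indicator neg right_diff_distrib cong: if_cong)
  show "integrable M (\<lambda>x. x) \<Longrightarrow> (\<integral>x. x * q x \<partial>M) = A * pos_mean M + B * nonpos_mean M"
    using integral_mult_step[of "\<lambda>x. x", OF _ q step] by (simp add: pos_mean_def nonpos_mean_def)
qed

end

locale pair_real_distribution = M1: real_distribution M1 + M2: real_distribution M2
  for M1 M2 :: "real measure"
begin

sublocale pair_prob_space M1 M2 ..

lemma sets_pair_eq_borel_pair [measurable_cong]: "sets (M1 \<Otimes>\<^sub>M M2) = sets (borel \<Otimes>\<^sub>M borel)"
  by (rule sets_pair_measure_cong) simp_all

context
  fixes g :: "real \<times> real \<Rightarrow> real"
  assumes g_measurable [measurable]: "g \<in> borel_measurable (borel \<Otimes>\<^sub>M borel)"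
    and g_bounded: "\<And>z. \<bar>g z\<bar> \<le> 1"
begin

lemma integrable_fst_mult:
  assumes a: "integrable M1 a"
  shows "integrable (M1 \<Otimes>\<^sub>M M2) (\<lambda>z. a (fst z) * g z)"
proof (rule Bochner_Integration.integrable_bound)
  have [measurable]: "a \<in> borel_measurable M1"
    using a by (rule borel_measurable_integrable)
  show "integrable (M1 \<Otimes>\<^sub>M M2) (\<lambda>z. a (fst z))"
    by (rule Fubini_integrable) (use a in simp_all)
  show "(\<lambda>z. a (fst z) * g z) \<in> borel_measurable (M1 \<Otimes>\<^sub>M M2)"
    by measurable
  show "AE z in M1 \<Otimes>\<^sub>M M2. norm (a (fst z) * g z) \<le> norm (a (fst z))"
    by (rule AE_I2) (simp add: abs_mult mult_left_le g_bounded)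
qed

lemma integral_fst_mult:
  assumes "integrable M1 a"
  shows "(\<integral>z. a (fst z) * g z \<partial>(M1 \<Otimes>\<^sub>M M2)) = (\<integral>x. a x * interim M2 g x \<partial>M1)"
  using integral_fst'[OF integrable_fst_mult[OF assms]] by (simp add: interim_def)

context
  assumes g_symmetric: "\<And>x y. g (x, y) = g (y, x)"
begin

lemma
  assumes b: "integrable M2 b"
  shows integrable_snd_mult: "integrable (M1 \<Otimes>\<^sub>M M2) (\<lambda>z. b (snd z) * g z)"
    and integral_snd_mult: "(\<integral>z. b (snd z) * g z \<partial>(M1 \<Otimes>\<^sub>M M2)) = (\<integral>y. b y * interim M1 g y \<partial>M2)"
proof -
  interpret swapped: pair_real_distribution M2 M1
    by intro_locales
  have [measurable]: "b \<in> borel_measurable M2"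
    using b by (rule borel_measurable_integrable)
  have swap_eq: "(\<lambda>(x, y). b x * g (y, x)) = (\<lambda>z. b (fst z) * g z)"
    using g_symmetric by auto
  show "integrable (M1 \<Otimes>\<^sub>M M2) (\<lambda>z. b (snd z) * g z)"
    using swapped.integrable_fst_mult[OF g_measurable g_bounded b]
    by (simp add: integrable_product_swap_iff[symmetric] swap_eq)
  have "(\<integral>z. b (snd z) * g z \<partial>(M1 \<Otimes>\<^sub>M M2)) = (\<integral>z. b (fst z) * g z \<partial>(M2 \<Otimes>\<^sub>M M1))"
    by (simp add: integral_product_swap[symmetric] swap_eq)
  also have "\<dots> = (\<integral>y. b y * interim M1 g y \<partial>M2)"
    by (rule swapped.integral_fst_mult[OF g_measurable g_bounded b])
  finally show "(\<integral>z. b (snd z) * g z \<partial>(M1 \<Otimes>\<^sub>M M2)) = (\<integral>y. b y * interim M1 g y \<partial>M2)" .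
qed

lemma integral_interim_eq: "(\<integral>x. interim M2 g x \<partial>M1) = (\<integral>y. interim M1 g y \<partial>M2)"
  using integral_fst_mult[of "\<lambda>_. 1"] integral_snd_mult[of "\<lambda>_. 1"] by simp

lemma welfare_eq_interim:
  assumes x1: "integrable M1 (\<lambda>x. x)" and x2: "integrable M2 (\<lambda>x. x)"
  shows "welfare M1 M2 g = (\<integral>x. x * interim M2 g x \<partial>M1) + (\<integral>y. y * interim M1 g y \<partial>M2)"
proof -
  have "welfare M1 M2 g = (\<integral>z. fst z * g z + snd z * g z \<partial>(M1 \<Otimes>\<^sub>M M2))"
    unfolding welfare_def by (simp add: algebra_simps)
  also have "\<dots> = (\<integral>z. fst z * g z \<partial>(M1 \<Otimes>\<^sub>M M2)) + (\<integral>z. snd z * g z \<partial>(M1 \<Otimes>\<^sub>M M2))"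
    using integrable_fst_mult[OF x1] integrable_snd_mult[OF x2] by simp
  also have "\<dots> = (\<integral>x. x * interim M2 g x \<partial>M1) + (\<integral>y. y * interim M1 g y \<partial>M2)"
    using integral_fst_mult[OF x1] integral_snd_mult[OF x2] by simp
  finally show ?thesis .
qed

end

end

end

context real_distribution
begin

lemma borel_measurable_interim:
  assumes "g \<in> borel_measurable (borel \<Otimes>\<^sub>M borel)"
  shows "interim M g \<in> borel_measurable borel"
proof -
  have "sets (borel \<Otimes>\<^sub>M M) = sets (borel \<Otimes>\<^sub>M borel)"
    by (rule sets_pair_measure_cong) simp_all
  then have "(\<lambda>(v, y). g (v, y)) \<in> borel_measurable (borel \<Otimes>\<^sub>M M)"
    using assms by (simp cong: measurable_cong_sets)
  then show ?thesis
    unfolding interim_def by (rule borel_measurable_lebesgue_integral)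
qed

context
  fixes g :: "real \<times> real \<Rightarrow> real"
  assumes g_measurable [measurable]: "g \<in> borel_measurable (borel \<Otimes>\<^sub>M borel)"
    and g_nonneg: "\<And>z. 0 \<le> g z" and g_le_one: "\<And>z. g z \<le> 1"
begin

lemma interim_nonneg: "0 \<le> interim M g v"
  unfolding interim_def by (rule integral_nonneg_AE) (simp add: g_nonneg)

lemma interim_le_one: "interim M g v \<le> 1"
  unfolding interim_def
  by (rule integral_le_const) (auto intro!: integrable_const_bound[where B=1] simp: g_nonneg g_le_one)

lemma integral_sign_interim_le:
  assumes g_symmetric: "\<And>x y. g (x, y) = g (y, x)"
  shows "(\<integral>x. (if 0 < x then 1 else -1) * interim M g x \<partial>M) \<le> pos_prob M ^ 2"
proof -
  interpret MM: pair_real_distribution M M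
    by intro_locales
  define s :: "real \<Rightarrow> real" where "s x = (if 0 < x then 1 else -1)" for x
  define pos :: "real \<Rightarrow> real" where "pos x = (if 0 < x then 1 else 0)" for x
  have g_bounded: "\<bar>g z\<bar> \<le> 1" for z
    using g_nonneg[of z] g_le_one[of z] by simp
  have s_int: "integrable M s"
    unfolding s_def by (rule integrable_const_bound[where B=1]) simp_all
  have pos_int: "integrable M pos"
    unfolding pos_def by (rule integrable_const_bound[where B=1]) simp_all
  have pos_snd_measurable: "(\<lambda>z. pos (snd z)) \<in> borel_measurable (borel \<Otimes>\<^sub>M borel)"
    unfolding pos_def by measurable
  have pos_bounded: "\<bar>pos (snd z)\<bar> \<le> 1" for z
    by (simp add: pos_def)
  have interim_pos: "interim M (\<lambda>z. pos (snd z)) x = pos_prob M" for x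
    using integral_pos_indicator by (simp add: interim_def pos_def)
  note int_s_g = MM.integrable_fst_mult[OF g_measurable g_bounded s_int]
    MM.integrable_snd_mult[OF g_measurable g_bounded g_symmetric s_int]
  note int_pos_pos = MM.integrable_fst_mult[OF pos_snd_measurable pos_bounded pos_int]
  have "2 * (\<integral>x. s x * interim M g x \<partial>M)
      = (\<integral>z. s (fst z) * g z + s (snd z) * g z \<partial>(M \<Otimes>\<^sub>M M))"
    using int_s_g MM.integral_fst_mult[OF g_measurable g_bounded s_int]
      MM.integral_snd_mult[OF g_measurable g_bounded g_symmetric s_int]
    by simp
  also have "\<dots> \<le> (\<integral>z. 2 * (pos (fst z) * pos (snd z)) \<partial>(M \<Otimes>\<^sub>M M))"
  proof (rule integral_mono)
    \<comment> \<open>(s x + s y) / 2 is 1, 0 or -1 according as two, one or none of x, y are positive\<close>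
    show "s (fst z) * g z + s (snd z) * g z \<le> 2 * (pos (fst z) * pos (snd z))" for z
      using g_nonneg[of z] g_le_one[of z] by (auto simp: s_def pos_def)
  qed (use int_s_g int_pos_pos in simp_all)
  also have "\<dots> = 2 * (\<integral>x. pos x * pos_prob M \<partial>M)"
    using MM.integral_fst_mult[OF pos_snd_measurable pos_bounded pos_int] by (simp add: interim_pos)
  also have "\<dots> = 2 * pos_prob M ^ 2"
    using integral_pos_indicator by (simp add: pos_def power2_eq_square)
  finally show ?thesis
    by (simp add: s_def)
qed

end

end

text \<open>Read for an agent whose value is positive with probability p, whose opponent's is with
  probability q, with interim probabilities A (own value positive) and B (nonpositive) of R, and
  with u, w the expectations of the value on v > 0 and on v \<le> 0: the left side is the agent's
  welfare gain over f^(2) (where A = q, B = 0) and the first factor on the right the gain of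
  f^(1) (where A = 1, B = q); t and D are the excesses over f^(2) of the ex-ante probability
  of R under the given rule and under f^(1).\<close>
lemma gain_le_mixture_gain:
  fixes p q A B u w t D :: real
  assumes p: "0 < p" "p < 1" and q: "0 < q" "q < 1" and u: "0 \<le> u" and w: "w \<le> 0"
    and A: "A \<le> 1" and B: "0 \<le> B" and sym_bound: "q * A - (1 - q) * B \<le> q\<^sup>2"
    and t: "t = p * A + (1 - p) * B - p * q" and D: "D = p * (1 - q) + (1 - p) * q"
  shows "A * u + B * w - q * u \<le> (u * (1 - q) + w * q) * (min (max t 0) D / D)"
proof -
  have "0 < D"
    using p q by (simp add: D add_pos_pos)
  have u_w: "0 \<le> (1 - p) * u - p * w"
    using p u w mult_nonneg_nonneg[of "1 - p" u] mult_nonneg_nonpos[of p w] by linarith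
  consider "t \<le> 0" | "0 < t" "t \<le> D" | "D < t"
    by linarith
  then show ?thesis
  proof cases
    case 1
    have "p * (A * u + B * w - q * u) = u * t - B * ((1 - p) * u - p * w)"
      by (simp add: t algebra_simps)
    also have "\<dots> \<le> 0"
      using mult_nonneg_nonpos[OF u 1] mult_nonneg_nonneg[OF B u_w] by linarith
    finally have "A * u + B * w - q * u \<le> 0"
      using p by (simp add: mult_le_0_iff)
    then show ?thesis
      using 1 \<open>0 < D\<close> by simp
  next
    case 2
    have "0 \<le> (1 - q) * B - q * (A - q)"
      using sym_bound by (simp add: algebra_simps power2_eq_square)
    with u_w have "0 \<le> ((1 - p) * u - p * w) * ((1 - q) * B - q * (A - q))"
      by simp
    moreover have "D * (A * u + B * w - q * u)
        = (u * (1 - q) + w * q) * t - ((1 - p) * u - p * w) * ((1 - q) * B - q * (A - q))"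
      by (simp add: t D algebra_simps)
    ultimately have "D * (A * u + B * w - q * u) \<le> (u * (1 - q) + w * q) * t"
      by linarith
    then show ?thesis
      using 2 \<open>0 < D\<close> by (simp add: pos_le_divide_eq mult.commute)
  next
    case 3
    have "(1 - p) * (A * u + B * w - q * u - (u * (1 - q) + w * q))
        = w * (t - D) + (A - 1) * ((1 - p) * u - p * w)"
      by (simp add: t D algebra_simps)
    also have "\<dots> \<le> 0"
      using mult_nonpos_nonneg[of w "t - D"] mult_nonpos_nonneg[of "A - 1" "(1 - p) * u - p * w"]
        w A u_w 3 by linarith
    finally have "A * u + B * w - q * u \<le> u * (1 - q) + w * q"
      using p by (simp add: mult_le_0_iff)
    then show ?thesis
      using 3 \<open>0 < D\<close> by simp
  qed
qed

lemma step_welfare_le_max: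
  fixes p1 p2 A1 B1 A2 B2 u1 w1 u2 w2 :: real
  assumes p: "0 < p1" "p1 < 1" "0 < p2" "p2 < 1"
    and u: "0 \<le> u1" "0 \<le> u2" and w: "w1 \<le> 0" "w2 \<le> 0"
    and A: "A1 \<le> 1" "A2 \<le> 1" and B: "0 \<le> B1" "0 \<le> B2"
    and sym1: "p2 * A1 - (1 - p2) * B1 \<le> p2\<^sup>2" and sym2: "p1 * A2 - (1 - p1) * B2 \<le> p1\<^sup>2"
    and consistent: "p1 * A1 + (1 - p1) * B1 = p2 * A2 + (1 - p2) * B2"
  shows "A1 * u1 + B1 * w1 + A2 * u2 + B2 * w2 \<le> max (u1 + p2 * w1 + u2 + p1 * w2) (p2 * u1 + p1 * u2)"
proof -
  define t where "t = p1 * A1 + (1 - p1) * B1 - p1 * p2"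
  define D where "D = p1 * (1 - p2) + (1 - p1) * p2"
  define c where "c = min (max t 0) D / D"
  have "0 < D"
    using p by (simp add: D_def add_pos_pos)
  then have c: "0 \<le> c" "c \<le> 1"
    by (auto simp: c_def)
  have gain1: "A1 * u1 + B1 * w1 - p2 * u1 \<le> (u1 * (1 - p2) + w1 * p2) * c"
    unfolding c_def by (rule gain_le_mixture_gain[OF p u(1) w(1) A(1) B(1) sym1 t_def D_def])
  have "t = p2 * A2 + (1 - p2) * B2 - p2 * p1" and "D = p2 * (1 - p1) + (1 - p2) * p1"
    using consistent by (simp_all add: t_def D_def algebra_simps)
  then have gain2: "A2 * u2 + B2 * w2 - p1 * u2 \<le> (u2 * (1 - p1) + w2 * p1) * c"
    unfolding c_def by (rule gain_le_mixture_gain[OF p(3,4,1,2) u(2) w(2) A(2) B(2) sym2])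
  define K where "K = u1 * (1 - p2) + w1 * p2 + (u2 * (1 - p1) + w2 * p1)"
  have "K * c \<le> max K 0"
    using c by (cases "0 \<le> K") (auto intro: mult_left_le mult_nonpos_nonneg max.coboundedI1 max.coboundedI2)
  moreover have "max (u1 + p2 * w1 + u2 + p1 * w2) (p2 * u1 + p1 * u2) = p2 * u1 + p1 * u2 + max K 0"
    by (simp add: K_def max_def algebra_simps)
  ultimately show ?thesis
    using gain1 gain2 by (simp add: K_def algebra_simps)
qed

lemma step_of_BIC:
  fixes q :: "real \<Rightarrow> real"
  assumes BIC: "\<forall>v\<in>V. \<forall>v'\<in>V. v * q v' \<le> v * q v" and "0 \<notin> V"
    and a: "a \<in> V" "0 < a" and b: "b \<in> V" "b < 0" and v: "v \<in> V"
  shows "q v = (if 0 < v then q a else q b)"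
proof (cases "0 < v")
  case True
  have "v * q a \<le> v * q v" and "a * q v \<le> a * q a"
    using BIC a v by auto
  with True a show ?thesis
    by simp
next
  case False
  with v \<open>0 \<notin> V\<close> have "v < 0"
    by (cases "v = 0") auto
  have "v * q b \<le> v * q v" and "b * q v \<le> b * q b"
    using BIC b v by auto
  with \<open>v < 0\<close> b show ?thesis
    by simp
qed

lemma BIC_of_step:
  fixes q :: "real \<Rightarrow> real"
  assumes "\<forall>v\<in>V. q v = (if 0 < v then A else B)" and "B \<le> A"
  shows "\<forall>v\<in>V. \<forall>v'\<in>V. v * q v' \<le> v * q v"
  using assms by (auto intro: mult_left_mono mult_left_mono_neg)

lemma card_chi: "card (chi (x, y)) = of_bool (0 < x) + of_bool (0 < y)"
proof -
  have "chi (x, y) = (if 0 < x then {1} else {}) \<union> (if 0 < y then {2} else {})"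
    by (auto simp: chi_def)
  then show ?thesis
    by simp
qed

lemma qmaj_1_eq: "qmaj 1 (x, y) = (if 0 < x \<or> 0 < y then 1 else 0)"
  by (simp add: qmaj_def card_chi)

lemma qmaj_2_eq: "qmaj 2 (x, y) = (if 0 < x \<and> 0 < y then 1 else 0)"
  by (simp add: qmaj_def card_chi)

lemma qmaj_commute: "qmaj k (x, y) = qmaj k (y, x)"
  by (simp add: qmaj_def card_chi add.commute)

lemma qmaj_bounds: "0 \<le> qmaj k z" "qmaj k z \<le> 1"
  by (simp_all add: qmaj_def)

lemma borel_measurable_qmaj:
  assumes "k \<in> {1, 2}"
  shows "qmaj k \<in> borel_measurable (borel \<Otimes>\<^sub>M borel)"
proof -
  have "qmaj 1 = (\<lambda>z. if 0 < fst z \<or> 0 < snd z then 1 else 0)"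
    and "qmaj 2 = (\<lambda>z. if 0 < fst z \<and> 0 < snd z then 1 else 0)"
    by (auto simp del: One_nat_def simp: qmaj_1_eq qmaj_2_eq)
  then show ?thesis
    using assms by auto
qed

lemma (in real_distribution)
  shows interim_qmaj_1: "interim M (qmaj 1) v = (if 0 < v then 1 else pos_prob M)"
    and interim_qmaj_2: "interim M (qmaj 2) v = (if 0 < v then pos_prob M else 0)"
  using integral_pos_indicator prob_space by (simp_all del: One_nat_def add: interim_def qmaj_1_eq qmaj_2_eq)

lemma (in real_distribution) interim_qmaj_step:
  assumes "k \<in> {1, 2}"
  obtains A B where "B \<le> A" and "\<And>v. interim M (qmaj k) v = (if 0 < v then A else B)"
proof -
  have "pos_prob M \<le> 1" "0 \<le> pos_prob M"
    by (simp_all add: pos_prob_def)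
  with assms that show ?thesis
    by (auto simp del: One_nat_def simp: interim_qmaj_1 interim_qmaj_2)
qed

text \<open>The bounds and the anonymity of an SCF only hold on V \<times> V, but the Fubini arguments need
  them everywhere.\<close>
definition symmetrize :: "(real \<times> real \<Rightarrow> real) \<Rightarrow> real \<times> real \<Rightarrow> real" where
  "symmetrize f z = max 0 (min 1 ((f z + f (snd z, fst z)) / 2))"

lemma symmetrize_commute: "symmetrize f (x, y) = symmetrize f (y, x)"
  by (simp add: symmetrize_def add.commute)

lemma symmetrize_bounds: "0 \<le> symmetrize f z" "symmetrize f z \<le> 1"
  by (simp_all add: symmetrize_def)

lemma borel_measurable_symmetrize:
  assumes [measurable]: "f \<in> borel_measurable (borel \<Otimes>\<^sub>M borel)"
  shows "symmetrize f \<in> borel_measurable (borel \<Otimes>\<^sub>M borel)"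
  unfolding symmetrize_def by measurable

lemma SCF_measurable: "SCF V f \<Longrightarrow> f \<in> borel_measurable (borel \<Otimes>\<^sub>M borel)"
  by (simp add: SCF_def borel_prod)

lemma symmetrize_eq:
  assumes "SCF V f" "anonymous V f" "x \<in> V" "y \<in> V"
  shows "symmetrize f (x, y) = f (x, y)"
  using assms by (simp add: symmetrize_def SCF_def anonymous_def)

locale two_agent_setting =
  fixes G1 G2 :: "real measure" and V :: "real set"
  assumes standing: "standing_assumptions G1 G2 V"
begin

sublocale pair_real_distribution G1 G2
  using standing
  by (auto simp: standing_assumptions_def pair_real_distribution_def real_distribution_def
      real_distribution_axioms_def)

lemma AE_in_V: "AE x in G1. x \<in> V" "AE x in G2. x \<in> V"
  using M1.AE_in_supp M2.AE_in_supp standing by (simp_all add: standing_assumptions_def)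

lemma zero_notin_V: "0 \<notin> V"
  using standing by (simp add: standing_assumptions_def)

lemma integrable_ident: "integrable G1 (\<lambda>x. x)" "integrable G2 (\<lambda>x. x)"
  using standing by (simp_all add: standing_assumptions_def)

lemma pos_prob_bounds: "0 < pos_prob G1" "pos_prob G1 < 1" "0 < pos_prob G2" "pos_prob G2 < 1"
  using standing by (simp_all add: standing_assumptions_def pos_prob_def)

lemma pos_and_neg_in_V:
  obtains a b where "a \<in> V" "0 < a" "b \<in> V" "b < 0"
  using M1.exists_pos_of_AE[OF AE_in_V(1) pos_prob_bounds(1)]
    M1.exists_neg_of_AE[OF AE_in_V(1) zero_notin_V pos_prob_bounds(2)] by blast

lemma AE_step_of_step_on_V:
  assumes "\<forall>v\<in>V. q v = (if 0 < v then A else B)"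
  shows "AE x in G1. q x = (if 0 < x then A else B)" and "AE x in G2. q x = (if 0 < x then A else B)"
  using AE_in_V by (auto elim!: eventually_mono simp: assms)

context
  fixes g :: "real \<times> real \<Rightarrow> real" and A1 B1 A2 B2 :: real
  assumes g_measurable [measurable]: "g \<in> borel_measurable (borel \<Otimes>\<^sub>M borel)"
    and g_bounded: "\<And>z. \<bar>g z\<bar> \<le> 1" and g_symmetric: "\<And>x y. g (x, y) = g (y, x)"
    and step1: "\<forall>v\<in>V. interim G2 g v = (if 0 < v then A1 else B1)"
    and step2: "\<forall>v\<in>V. interim G1 g v = (if 0 < v then A2 else B2)"
begin

lemma welfare_of_step_interims:
  "welfare G1 G2 g = A1 * pos_mean G1 + B1 * nonpos_mean G1 + A2 * pos_mean G2 + B2 * nonpos_mean G2"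
proof -
  have "(\<integral>x. x * interim G2 g x \<partial>G1) = A1 * pos_mean G1 + B1 * nonpos_mean G1"
    by (rule M1.integral_id_mult_step[OF M2.borel_measurable_interim[OF g_measurable]
          AE_step_of_step_on_V(1)[OF step1] integrable_ident(1)])
  moreover have "(\<integral>y. y * interim G1 g y \<partial>G2) = A2 * pos_mean G2 + B2 * nonpos_mean G2"
    by (rule M2.integral_id_mult_step[OF M1.borel_measurable_interim[OF g_measurable]
          AE_step_of_step_on_V(2)[OF step2] integrable_ident(2)])
  ultimately show ?thesis
    using welfare_eq_interim[OF g_measurable g_bounded g_symmetric integrable_ident] by simp
qed

lemma step_interims_consistent:
  "pos_prob G1 * A1 + (1 - pos_prob G1) * B1 = pos_prob G2 * A2 + (1 - pos_prob G2) * B2"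
  using integral_interim_eq[OF g_measurable g_bounded g_symmetric]
    M1.integral_step[OF M2.borel_measurable_interim[OF g_measurable] AE_step_of_step_on_V(1)[OF step1]]
    M2.integral_step[OF M1.borel_measurable_interim[OF g_measurable] AE_step_of_step_on_V(2)[OF step2]]
  by (simp add: algebra_simps)

end

lemma welfare_qmaj_1:
  "welfare G1 G2 (qmaj 1)
    = pos_mean G1 + pos_prob G2 * nonpos_mean G1 + pos_mean G2 + pos_prob G1 * nonpos_mean G2"
proof -
  have "welfare G1 G2 (qmaj 1)
      = 1 * pos_mean G1 + pos_prob G2 * nonpos_mean G1 + 1 * pos_mean G2 + pos_prob G1 * nonpos_mean G2"
    by (rule welfare_of_step_interims)
      (simp_all del: One_nat_def add: borel_measurable_qmaj qmaj_bounds qmaj_commute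
        M1.interim_qmaj_1 M2.interim_qmaj_1)
  then show ?thesis
    by simp
qed

lemma welfare_qmaj_2: "welfare G1 G2 (qmaj 2) = pos_prob G2 * pos_mean G1 + pos_prob G1 * pos_mean G2"
proof -
  have "welfare G1 G2 (qmaj 2)
      = pos_prob G2 * pos_mean G1 + 0 * nonpos_mean G1 + pos_prob G1 * pos_mean G2 + 0 * nonpos_mean G2"
    by (rule welfare_of_step_interims)
      (simp_all add: borel_measurable_qmaj qmaj_bounds qmaj_commute M1.interim_qmaj_2 M2.interim_qmaj_2)
  then show ?thesis
    by simp
qed

lemma feasible_qmaj:
  assumes k: "k \<in> {1, 2}"
  shows "feasible G1 G2 V (qmaj k)"
proof -
  have "SCF V (qmaj k)"
    using borel_measurable_qmaj[OF k] by (simp add: SCF_def qmaj_bounds borel_prod)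
  moreover have "anonymous V (qmaj k)"
    by (simp add: anonymous_def qmaj_commute)
  moreover have "BIC G1 G2 V (qmaj k)"
  proof -
    obtain A1 B1 A2 B2 where "B1 \<le> A1" "\<And>v. interim G2 (qmaj k) v = (if 0 < v then A1 else B1)"
      and "B2 \<le> A2" "\<And>v. interim G1 (qmaj k) v = (if 0 < v then A2 else B2)"
      using M1.interim_qmaj_step M2.interim_qmaj_step k by metis
    then have "\<forall>v\<in>V. \<forall>v'\<in>V. v * interim G2 (qmaj k) v' \<le> v * interim G2 (qmaj k) v"
      and "\<forall>v\<in>V. \<forall>v'\<in>V. v * interim G1 (qmaj k) v' \<le> v * interim G1 (qmaj k) v"
      by (metis BIC_of_step)+
    then show ?thesis
      by (simp add: BIC_def interim_def qmaj_commute[of k _ v for v])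
  qed
  ultimately show ?thesis
    by (simp add: feasible_def)
qed

lemma symmetric_welfare_le_max_qmaj:
  fixes g :: "real \<times> real \<Rightarrow> real"
  assumes g_measurable [measurable]: "g \<in> borel_measurable (borel \<Otimes>\<^sub>M borel)"
    and g_nonneg: "\<And>z. 0 \<le> g z" and g_le_one: "\<And>z. g z \<le> 1"
    and g_symmetric: "\<And>x y. g (x, y) = g (y, x)"
    and BIC1: "\<forall>v\<in>V. \<forall>v'\<in>V. v * interim G2 g v' \<le> v * interim G2 g v"
    and BIC2: "\<forall>v\<in>V. \<forall>v'\<in>V. v * interim G1 g v' \<le> v * interim G1 g v"
  shows "welfare G1 G2 g \<le> max (welfare G1 G2 (qmaj 1)) (welfare G1 G2 (qmaj 2))"
proof -
  obtain a b where a: "a \<in> V" "0 < a" and b: "b \<in> V" "b < 0"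
    by (rule pos_and_neg_in_V)
  have g_bounded: "\<bar>g z\<bar> \<le> 1" for z
    using g_nonneg[of z] g_le_one[of z] by simp
  define A1 B1 A2 B2 where "A1 = interim G2 g a" and "B1 = interim G2 g b"
    and "A2 = interim G1 g a" and "B2 = interim G1 g b"
  have step1: "\<forall>v\<in>V. interim G2 g v = (if 0 < v then A1 else B1)"
    using step_of_BIC[OF BIC1 zero_notin_V a b] by (simp add: A1_def B1_def A2_def B2_def)
  have step2: "\<forall>v\<in>V. interim G1 g v = (if 0 < v then A2 else B2)"
    using step_of_BIC[OF BIC2 zero_notin_V a b] by (simp add: A1_def B1_def A2_def B2_def)
  have sym1: "pos_prob G2 * A1 - (1 - pos_prob G2) * B1 \<le> (pos_prob G2)\<^sup>2"
    using M2.integral_sign_interim_le[OF g_measurable g_nonneg g_le_one g_symmetric]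
      M2.integral_sign_mult_step[OF M2.borel_measurable_interim[OF g_measurable]
        AE_step_of_step_on_V(2)[OF step1]]
    by (simp add: mult.commute)
  have sym2: "pos_prob G1 * A2 - (1 - pos_prob G1) * B2 \<le> (pos_prob G1)\<^sup>2"
    using M1.integral_sign_interim_le[OF g_measurable g_nonneg g_le_one g_symmetric]
      M1.integral_sign_mult_step[OF M1.borel_measurable_interim[OF g_measurable]
        AE_step_of_step_on_V(1)[OF step2]]
    by (simp add: mult.commute)
  have "welfare G1 G2 g
      = A1 * pos_mean G1 + B1 * nonpos_mean G1 + A2 * pos_mean G2 + B2 * nonpos_mean G2"
    by (rule welfare_of_step_interims[OF g_measurable g_bounded g_symmetric step1 step2])
  also have "\<dots> \<le> max (pos_mean G1 + pos_prob G2 * nonpos_mean G1 + pos_mean G2 + pos_prob G1 * nonpos_mean G2)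
      (pos_prob G2 * pos_mean G1 + pos_prob G1 * pos_mean G2)"
    by (rule step_welfare_le_max[OF pos_prob_bounds M1.pos_mean_nonneg M2.pos_mean_nonneg
          M1.nonpos_mean_nonpos M2.nonpos_mean_nonpos _ _ _ _ sym1 sym2
          step_interims_consistent[OF g_measurable g_bounded g_symmetric step1 step2]])
      (simp_all add: A1_def B1_def A2_def B2_def M1.interim_le_one M2.interim_le_one M1.interim_nonneg
        M2.interim_nonneg g_nonneg g_le_one)
  finally show ?thesis
    unfolding welfare_qmaj_1 welfare_qmaj_2 .
qed

context
  fixes f :: "real \<times> real \<Rightarrow> real"
  assumes f_SCF: "SCF V f" and f_anonymous: "anonymous V f"
begin

declare SCF_measurable[OF f_SCF, measurable]
  borel_measurable_symmetrize[OF SCF_measurable[OF f_SCF], measurable]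

lemma
  assumes v: "v \<in> V"
  shows interim_symmetrize_1: "interim G2 (symmetrize f) v = (\<integral>x. f (v, x) \<partial>G2)"
    and interim_symmetrize_2: "interim G1 (symmetrize f) v = (\<integral>x. f (x, v) \<partial>G1)"
proof -
  show "interim G2 (symmetrize f) v = (\<integral>x. f (v, x) \<partial>G2)"
    unfolding interim_def
  proof (rule integral_cong_AE)
    show "AE x in G2. symmetrize f (v, x) = f (v, x)"
      using AE_in_V(2) by eventually_elim (simp add: symmetrize_eq[OF f_SCF f_anonymous] v)
  qed measurable
  show "interim G1 (symmetrize f) v = (\<integral>x. f (x, v) \<partial>G1)"
    unfolding interim_def
  proof (rule integral_cong_AE)
    show "AE x in G1. symmetrize f (v, x) = f (x, v)"
      using AE_in_V(1) by eventually_elim (simp add: symmetrize_commute symmetrize_eq[OF f_SCF f_anonymous] v)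
  qed measurable
qed

lemma welfare_symmetrize: "welfare G1 G2 (symmetrize f) = welfare G1 G2 f"
  unfolding welfare_def
proof (rule integral_cong_AE)
  show "AE z in G1 \<Otimes>\<^sub>M G2. symmetrize f z * (fst z + snd z) = f z * (fst z + snd z)"
  proof (rule AE_pair_measure)
    show "{z \<in> space (G1 \<Otimes>\<^sub>M G2). symmetrize f z * (fst z + snd z) = f z * (fst z + snd z)}
        \<in> sets (G1 \<Otimes>\<^sub>M G2)"
      by measurable
    show "AE x in G1. AE y in G2.
        symmetrize f (x, y) * (fst (x, y) + snd (x, y)) = f (x, y) * (fst (x, y) + snd (x, y))"
      using AE_in_V(1)
    proof eventually_elim
      case (elim x)
      show ?case
        using AE_in_V(2) by eventually_elim (simp add: symmetrize_eq[OF f_SCF f_anonymous] elim)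
    qed
  qed
qed measurable

end

lemma welfare_le_max_qmaj:
  assumes "feasible G1 G2 V f"
  shows "welfare G1 G2 f \<le> max (welfare G1 G2 (qmaj 1)) (welfare G1 G2 (qmaj 2))"
proof -
  have f: "SCF V f" "anonymous V f" and BIC: "BIC G1 G2 V f"
    using assms by (simp_all add: feasible_def)
  have "\<forall>v\<in>V. \<forall>v'\<in>V. v * interim G2 (symmetrize f) v' \<le> v * interim G2 (symmetrize f) v"
    and "\<forall>v\<in>V. \<forall>v'\<in>V. v * interim G1 (symmetrize f) v' \<le> v * interim G1 (symmetrize f) v"
    using BIC by (auto simp: BIC_def interim_symmetrize_1[OF f] interim_symmetrize_2[OF f])
  then have "welfare G1 G2 (symmetrize f) \<le> max (welfare G1 G2 (qmaj 1)) (welfare G1 G2 (qmaj 2))"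
    by (intro symmetric_welfare_le_max_qmaj borel_measurable_symmetrize SCF_measurable[OF f(1)]
        symmetrize_bounds symmetrize_commute)
  then show ?thesis
    unfolding welfare_symmetrize[OF f] .
qed

end

theorem theorem1:
  fixes G1 G2 :: "real measure" and V :: "real set"
  assumes "standing_assumptions G1 G2 V"
  shows "(\<exists>k\<in>{1, 2}. solves_OPT G1 G2 V (qmaj k)) \<and>
         (\<exists>f. solves_OPT G1 G2 V f \<and> ordinal V f)"
proof -
  interpret two_agent_setting G1 G2 V
    by (rule two_agent_setting.intro[OF assms])
  obtain k where k: "k \<in> {1, 2}"
    and best: "max (welfare G1 G2 (qmaj 1)) (welfare G1 G2 (qmaj 2)) = welfare G1 G2 (qmaj k)"
    by (metis insertCI max_def)
  have "welfare G1 G2 f \<le> welfare G1 G2 (qmaj k)" if "feasible G1 G2 V f" for f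
    using welfare_le_max_qmaj[OF that] unfolding best .
  with feasible_qmaj[OF k] have "solves_OPT G1 G2 V (qmaj k)"
    by (simp add: solves_OPT_def)
  moreover have "ordinal V (qmaj k)"
    by (simp add: ordinal_def qmaj_def)
  ultimately show ?thesis
    using k by blast
qed

end
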